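(* Let $P,P'\subset\mathbb R^2$ be two open bounded convex polygons and $Q$ the convex hull of $P\cup P'$. If $x_c$ is a vertex of $P$ such that $d(x_c,P')=d_H(P,P')$, then $x_c$ is a vertex of $Q$. If the angle of $P$ at $x_c$ is $\alpha$, then the angle of $Q$ at $x_c$ is at most $(\alpha+\pi)/2<\pi$.
   Context: $d_H(P,P')=\max(\sup_{x\in P}d(x,P'),\sup_{x'\in P'}d(x',P))$ is the Hausdorff distance. *)

theory Defs
  imports "HOL-Analysis.Analysis"
begin

definition open_convex_polygon :: "(real^2) set \<Rightarrow> bool" where
  "open_convex_polygon P \<longleftrightarrow>
     (\<exists>V. finite V \<and> P = interior (convex hull V) \<and> P \<noteq> {})"

definition polygon_vertex :: "real^2 \<Rightarrow> (real^2) set \<Rightarrow> bool" where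
  "polygon_vertex x P \<longleftrightarrow> x extreme_point_of (closure P)"

definition hausdorff_dist :: "(real^2) set \<Rightarrow> (real^2) set \<Rightarrow> real" where
  "hausdorff_dist P P' = max (SUP x\<in>P. infdist x P') (SUP x'\<in>P'. infdist x' P)"

definition vec_angle :: "real^2 \<Rightarrow> real^2 \<Rightarrow> real" where
  "vec_angle u v = arccos (inner u v / (norm u * norm v))"

definition polygon_angle :: "(real^2) set \<Rightarrow> real^2 \<Rightarrow> real" where
  "polygon_angle P x = (SUP p\<in>(P \<times> P). vec_angle (fst p - x) (snd p - x))"

end

theory Submission
  imports Defs
begin

text \<open>If \<open>d = d(x\<^sub>c, P') = d\<^sub>H(P, P')\<close> vanishes then \<open>P = P'\<close> and \<open>Q = P\<close>. Otherwise the
  nearest point of \<open>P'\<close> to \<open>x\<^sub>c\<close> yields a unit vector \<open>m\<close> with \<open>inner (y - x\<^sub>c) m \<ge> d\<close> on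
  \<open>P'\<close>; as every point of \<open>P\<close> is within \<open>d\<close> of \<open>P'\<close>, \<open>P\<close> lies in the open half-plane
  \<open>inner (z - x\<^sub>c) m > 0\<close>. Measure polar angles from \<open>m\<close> in this half-plane. A point \<open>y\<close> of
  \<open>P'\<close> at angle \<open>\<phi>\<close> has height \<open>norm (y - x\<^sub>c) * cos \<phi> \<ge> d\<close>, whereas points at angle \<open>\<psi>\<close>
  are at distance at least \<open>norm (y - x\<^sub>c) * sin (\<phi> - \<psi>)\<close> from \<open>y\<close>; since \<open>y\<close> is within
  \<open>d\<close> of \<open>P\<close>, the angles of \<open>P\<close> reach \<open>2\<phi> - pi/2\<close> from above and \<open>2\<phi> + pi/2\<close> from below.
  Combined with the angular width \<open>\<alpha> < pi\<close> of \<open>P\<close> at its vertex, all angles of \<open>P \<union> P'\<close>,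
  hence of \<open>Q\<close>, lie in an interval of length \<open>(\<alpha> + pi) / 2 < pi\<close>. So \<open>Q\<close> is contained in a
  pointed cone at \<open>x\<^sub>c\<close>, which makes \<open>x\<^sub>c\<close> a vertex of \<open>Q\<close> with angle at most \<open>(\<alpha> + pi) / 2\<close>.\<close>

section \<open>Polar angles in a half-plane\<close>

definition rot90 :: "real^2 \<Rightarrow> real^2" where
  "rot90 m = vector [-(m$2), m$1]"

definition plane_frame :: "real^2 \<Rightarrow> real^2 \<Rightarrow> bool" where
  "plane_frame m k \<longleftrightarrow> norm m = 1 \<and> (k = rot90 m \<or> k = - rot90 m)"

text \<open>The polar angle of \<open>v\<close> measured from \<open>m\<close> towards \<open>k\<close>; it is the genuine polar angle
  only on the open half-plane \<open>inner v m > 0\<close>, where it ranges over \<open>]-pi/2, pi/2[\<close>.\<close>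
definition half_plane_arg :: "real^2 \<Rightarrow> real^2 \<Rightarrow> real^2 \<Rightarrow> real" where
  "half_plane_arg m k v = arctan (inner v k / inner v m)"

lemma inner_vec2: "inner (a::real^2) b = a$1 * b$1 + a$2 * b$2"
  by (simp add: inner_vec_def sum_2)

lemma plane_frame_uminus: "plane_frame m k \<Longrightarrow> plane_frame m (- k)"
  by (auto simp: plane_frame_def)

lemma plane_frame_parseval:
  assumes "plane_frame m k"
  shows "inner a m * inner b m + inner a k * inner b k = inner a b"
proof -
  have "inner m m = 1"
    using assms by (simp add: plane_frame_def flip: power2_norm_eq_inner)
  then have "m$1^2 + m$2^2 = 1"
    by (simp add: inner_vec2 power2_eq_square)
  moreover have "inner a m * inner b m + inner a k * inner b k
      = (a$1*b$1 + a$2*b$2) * (m$1^2 + m$2^2)"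
    using assms unfolding plane_frame_def
    by (auto simp: inner_vec2 rot90_def vector_2 algebra_simps power2_eq_square)
  ultimately show ?thesis by (simp add: inner_vec2)
qed

lemma half_plane_arg_uminus: "half_plane_arg m (- k) v = - half_plane_arg m k v"
  by (simp add: half_plane_arg_def arctan_minus)

lemma half_plane_arg_bounds: "- (pi/2) < half_plane_arg m k v" "half_plane_arg m k v < pi/2"
  using arctan_bounded unfolding half_plane_arg_def by auto

lemma half_plane_arg_polar:
  assumes "plane_frame m k" "0 < inner v m"
  shows "inner v m = norm v * cos (half_plane_arg m k v)"
    and "inner v k = norm v * sin (half_plane_arg m k v)"
proof -
  define t where "t = inner v k / inner v m"
  have vk: "inner v k = t * inner v m"
    using assms(2) by (simp add: t_def)
  have "norm v ^ 2 = inner v m ^ 2 * (1 + t^2)"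
    using plane_frame_parseval[OF assms(1), of v v] vk
    by (simp add: algebra_simps power2_eq_square flip: power2_norm_eq_inner)
  then have nv: "norm v = inner v m * sqrt (1 + t^2)"
    using assms(2)
    by (metis norm_ge_zero real_sqrt_mult real_sqrt_abs real_sqrt_unique abs_of_pos)
  have "0 < sqrt (1 + t^2)"
    by (simp add: add_pos_nonneg)
  then show "inner v m = norm v * cos (half_plane_arg m k v)"
    and "inner v k = norm v * sin (half_plane_arg m k v)"
    by (simp_all add: nv vk half_plane_arg_def cos_arctan sin_arctan flip: t_def)
qed

lemma inner_eq_cos_half_plane_arg_diff:
  assumes "plane_frame m k" "0 < inner a m" "0 < inner b m"
  shows "inner a b = norm a * norm b * cos (half_plane_arg m k a - half_plane_arg m k b)"
  using plane_frame_parseval[OF assms(1), of a b]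
    half_plane_arg_polar[OF assms(1,2)] half_plane_arg_polar[OF assms(1,3)]
  by (simp add: cos_diff algebra_simps)

lemma vec_angle_eq_half_plane_arg_diff:
  assumes "plane_frame m k" "0 < inner a m" "0 < inner b m"
  shows "vec_angle a b = \<bar>half_plane_arg m k a - half_plane_arg m k b\<bar>"
proof -
  have "a \<noteq> 0" "b \<noteq> 0"
    using assms(2,3) by auto
  then have "inner a b / (norm a * norm b) = cos (half_plane_arg m k a - half_plane_arg m k b)"
    using inner_eq_cos_half_plane_arg_diff[OF assms] by simp
  moreover have "\<bar>half_plane_arg m k a - half_plane_arg m k b\<bar> \<le> pi"
    using half_plane_arg_bounds[of m k a] half_plane_arg_bounds[of m k b] by linarith
  ultimately show ?thesis
    unfolding vec_angle_def by (simp add: arccos_cos_eq_abs)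
qed

text \<open>The slope of a nonnegative combination is a weighted mean of the two slopes.\<close>
lemma half_plane_arg_nonneg_combination:
  assumes "0 < inner a m" "0 < inner b m" "0 \<le> s" "0 \<le> t" "0 < s + t"
  shows "min (half_plane_arg m k a) (half_plane_arg m k b) \<le> half_plane_arg m k (s *\<^sub>R a + t *\<^sub>R b)"
    and "half_plane_arg m k (s *\<^sub>R a + t *\<^sub>R b) \<le> max (half_plane_arg m k a) (half_plane_arg m k b)"
proof -
  define ra rb where "ra = inner a k / inner a m" and "rb = inner b k / inner b m"
  define wa wb where "wa = s * inner a m" and "wb = t * inner b m"
  have "0 \<le> wa" "0 \<le> wb"
    using assms by (simp_all add: wa_def wb_def)
  moreover have "0 < wa \<or> 0 < wb"
    using assms by (cases "s = 0") (simp_all add: wa_def wb_def)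
  ultimately have w: "0 \<le> wa" "0 \<le> wb" "0 < wa + wb"
    by auto
  have slope: "inner (s *\<^sub>R a + t *\<^sub>R b) k / inner (s *\<^sub>R a + t *\<^sub>R b) m
      = (wa * ra + wb * rb) / (wa + wb)"
    using assms(1,2) by (simp add: inner_add_left wa_def wb_def ra_def rb_def)
  have "wa * min ra rb + wb * min ra rb \<le> wa * ra + wb * rb"
    using w by (intro add_mono mult_left_mono) auto
  moreover have "wa * ra + wb * rb \<le> wa * max ra rb + wb * max ra rb"
    using w by (intro add_mono mult_left_mono) auto
  ultimately have "min ra rb \<le> (wa * ra + wb * rb) / (wa + wb)"
    "(wa * ra + wb * rb) / (wa + wb) \<le> max ra rb"
    using w(3) by (simp_all add: pos_le_divide_eq pos_divide_le_eq algebra_simps)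
  then show "min (half_plane_arg m k a) (half_plane_arg m k b) \<le> half_plane_arg m k (s *\<^sub>R a + t *\<^sub>R b)"
    and "half_plane_arg m k (s *\<^sub>R a + t *\<^sub>R b) \<le> max (half_plane_arg m k a) (half_plane_arg m k b)"
    unfolding half_plane_arg_def slope ra_def[symmetric] rb_def[symmetric]
    by (auto simp: min_def max_def arctan_le_iff)
qed

lemma norm_diff_ge_sin_half_plane_arg_diff:
  assumes "plane_frame m k" "0 < inner a m" "0 < inner b m"
  shows "norm a * sin (min (half_plane_arg m k a - half_plane_arg m k b) (pi/2)) \<le> norm (a - b)"
proof -
  define D where "D = half_plane_arg m k a - half_plane_arg m k b"
  have "D < pi"
    using half_plane_arg_bounds[of m k a] half_plane_arg_bounds[of m k b] by (simp add: D_def)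
  have law_of_cosines: "norm (a - b)^2 = norm a ^ 2 + norm b ^ 2 - 2 * (norm a * norm b * cos D)"
    using inner_eq_cos_half_plane_arg_diff[OF assms]
    by (simp add: D_def power2_norm_eq_inner inner_diff_left inner_diff_right inner_commute)
  show ?thesis
  proof (cases "pi/2 \<le> D")
    case True
    have "0 \<le> cos (pi - D)"
      using True \<open>D < pi\<close> by (intro cos_ge_zero) auto
    then have "norm a * norm b * cos D \<le> 0"
      by (simp add: mult_nonneg_nonpos)
    then have "norm a ^ 2 \<le> norm (a - b)^2"
      using law_of_cosines by (smt (verit) zero_le_power2)
    then have "norm a \<le> norm (a - b)"
      by (rule power2_le_imp_le) simp
    then show ?thesis
      using True by (simp add: D_def[symmetric])
  next
    case False
    have "norm (a - b)^2 - (norm a * sin D)^2 = (norm b - norm a * cos D)^2"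
      using law_of_cosines sin_cos_squared_add[of D] by algebra
    then have "(norm a * sin D)^2 \<le> norm (a - b)^2"
      by (metis diff_ge_0_iff_ge zero_le_power2)
    then have "norm a * sin D \<le> norm (a - b)"
      by (rule power2_le_imp_le) simp
    then show ?thesis
      using False by (simp add: D_def[symmetric])
  qed
qed

lemma norm_diff_ge_if_half_plane_arg_le:
  assumes frame: "plane_frame m k" and a: "0 < inner a m" and b: "0 < inner b m" and "0 < \<eta>"
    and le: "half_plane_arg m k b \<le> 2 * half_plane_arg m k a - pi/2 - \<eta>"
  shows "norm a * sin (min (pi/2 - half_plane_arg m k a + \<eta>) (pi/2)) \<le> norm (a - b)"
proof -
  define \<phi> \<psi> where "\<phi> = half_plane_arg m k a" and "\<psi> = half_plane_arg m k b"
  have "\<phi> < pi/2"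
    unfolding \<phi>_def by (rule half_plane_arg_bounds)
  then have "sin (min (pi/2 - \<phi> + \<eta>) (pi/2)) \<le> sin (min (\<phi> - \<psi>) (pi/2))"
    using le \<open>0 < \<eta>\<close> by (intro sin_monotone_2pi_le) (auto simp: min_def \<phi>_def \<psi>_def)
  then have "norm a * sin (min (pi/2 - \<phi> + \<eta>) (pi/2)) \<le> norm a * sin (min (\<phi> - \<psi>) (pi/2))"
    by (simp add: mult_left_mono)
  also have "\<dots> \<le> norm (a - b)"
    using norm_diff_ge_sin_half_plane_arg_diff[OF frame a b] le \<open>\<phi> < pi/2\<close> \<open>0 < \<eta>\<close>
    by (simp add: \<phi>_def \<psi>_def)
  finally show ?thesis
    by (simp add: \<phi>_def)
qed

lemma cos_less_sin_min:
  assumes "0 < \<phi>" "\<phi> < pi/2" "0 < \<eta>"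
  shows "cos \<phi> < sin (min (pi/2 - \<phi> + \<eta>) (pi/2))"
proof (cases "\<phi> \<le> \<eta>")
  case True
  have "cos \<phi> < cos 0"
    using assms by (intro cos_monotone_0_pi) auto
  then show ?thesis
    using True by (simp add: min_def)
next
  case False
  then have "sin (pi/2 - \<phi>) < sin (pi/2 - \<phi> + \<eta>)"
    using assms by (intro sin_monotone_2pi) auto
  then show ?thesis
    using False by (simp add: min_def cos_sin_eq)
qed

text \<open>A point at polar angle \<open>\<psi>\<close> lies at distance \<open>\<ge> norm (y - x) * sin (\<phi> - \<psi>)\<close> from a
  point \<open>y\<close> at polar angle \<open>\<phi>\<close>. If \<open>\<psi> < 2\<phi> - pi/2\<close>, this exceeds
  \<open>norm (y - x) * cos \<phi> = inner (y - x) m\<close>, the height of \<open>y\<close> above \<open>x\<close>.\<close>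
lemma exists_half_plane_arg_gt:
  assumes frame: "plane_frame m k" and "0 < d"
    and P: "\<forall>c\<in>P. 0 < inner (c - x) m" "P \<noteq> {}"
    and y: "d \<le> inner (y - x) m" "infdist y P \<le> d" and "0 < \<eta>"
  shows "\<exists>c\<in>P. 2 * half_plane_arg m k (y - x) - pi/2 - \<eta> < half_plane_arg m k (c - x)"
proof (rule ccontr)
  define \<phi> where "\<phi> = half_plane_arg m k (y - x)"
  define s where "s = sin (min (pi/2 - \<phi> + \<eta>) (pi/2))"
  assume "\<not> ?thesis"
  then have far: "half_plane_arg m k (c - x) \<le> 2 * \<phi> - pi/2 - \<eta>" if "c \<in> P" for c
    using that by (auto simp: \<phi>_def not_less)
  have y_pos: "0 < inner (y - x) m"
    using y \<open>0 < d\<close> by linarith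
  obtain c0 where "c0 \<in> P"
    using P by auto
  then have "0 < \<phi>"
    using far half_plane_arg_bounds(1)[of m k "c0 - x"] \<open>0 < \<eta>\<close> by fastforce
  have "norm (y - x) * s \<le> dist y c" if "c \<in> P" for c
    using norm_diff_ge_if_half_plane_arg_le[OF frame y_pos _ \<open>0 < \<eta>\<close> far[OF that, unfolded \<phi>_def]] P(1) that
    by (simp add: s_def \<phi>_def dist_norm)
  then have "norm (y - x) * s \<le> infdist y P"
    unfolding infdist_notempty[OF P(2)] using P(2) by (intro cINF_greatest) auto
  moreover have "cos \<phi> < s"
    unfolding s_def using \<open>0 < \<phi>\<close> half_plane_arg_bounds(2) \<open>0 < \<eta>\<close>
    by (intro cos_less_sin_min) (auto simp: \<phi>_def)
  then have "norm (y - x) * cos \<phi> < norm (y - x) * s"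
    using y_pos by (intro mult_strict_left_mono) auto
  ultimately show False
    using half_plane_arg_polar(1)[OF frame y_pos] y by (simp add: \<phi>_def)
qed

lemma exists_half_plane_arg_lt:
  assumes "plane_frame m k" and "0 < d"
    and "\<forall>c\<in>P. 0 < inner (c - x) m" "P \<noteq> {}"
    and "d \<le> inner (y - x) m" "infdist y P \<le> d" and "0 < \<eta>"
  shows "\<exists>c\<in>P. half_plane_arg m k (c - x) < 2 * half_plane_arg m k (y - x) + pi/2 + \<eta>"
proof -
  obtain c where "c \<in> P"
    "2 * half_plane_arg m (- k) (y - x) - pi/2 - \<eta> < half_plane_arg m (- k) (c - x)"
    using exists_half_plane_arg_gt[OF plane_frame_uminus[OF assms(1)] assms(2-)] by blast
  then show ?thesis
    unfolding half_plane_arg_uminus by (intro bexI[of _ c]) auto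
qed

section \<open>Pointed cones\<close>

lemma extreme_point_of_cone_bound:
  fixes x w :: "'a::real_inner"
  assumes "x \<in> S" "0 < c" and cone: "\<forall>z\<in>S. c * norm (z - x) \<le> inner (z - x) w"
  shows "x extreme_point_of S"
  unfolding extreme_point_of_def
proof (intro conjI ballI \<open>x \<in> S\<close>)
  fix a b assume "a \<in> S" "b \<in> S"
  show "x \<notin> open_segment a b"
  proof
    assume "x \<in> open_segment a b"
    then obtain u where u: "a \<noteq> b" "0 < u" "u < 1" "x = (1 - u) *\<^sub>R a + u *\<^sub>R b"
      by (auto simp: in_segment)
    have "(1 - u) *\<^sub>R (a - x) + u *\<^sub>R (b - x) = 0"
      using u(4) by (simp add: algebra_simps)
    then have sum0: "(1 - u) * inner (a - x) w + u * inner (b - x) w = 0"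
      by (metis inner_add_left inner_scaleR_left inner_zero_left)
    have ca: "c * norm (a - x) \<le> inner (a - x) w" and cb: "c * norm (b - x) \<le> inner (b - x) w"
      using cone \<open>a \<in> S\<close> \<open>b \<in> S\<close> by auto
    then have "0 \<le> inner (a - x) w" "0 \<le> inner (b - x) w"
      using \<open>0 < c\<close> by (smt (verit) mult_nonneg_nonneg norm_ge_zero)+
    then have "inner (a - x) w = 0" "inner (b - x) w = 0"
      using sum0 u(2,3) by (smt (verit) mult_pos_pos mult_nonneg_nonneg)+
    then have "a = x" "b = x"
      using ca cb \<open>0 < c\<close> by (auto simp: mult_le_0_iff)
    then show False
      using u(1) by simp
  qed
qed

lemma cone_bound_normalize:
  fixes x a :: "'a::real_inner"
  assumes "a \<noteq> 0" "0 < c" "\<forall>z\<in>S. c * norm (z - x) \<le> inner (z - x) a"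
  shows "\<exists>w c'. norm w = 1 \<and> 0 < c' \<and> c' \<le> 1/2 \<and>
           (\<forall>z\<in>S. c' * norm (z - x) \<le> inner (z - x) w)"
proof (intro exI conjI ballI)
  define c' where "c' = min (c / norm a) (1/2)"
  show "norm (a /\<^sub>R norm a) = 1" "0 < c'"
    using assms by (auto simp: c'_def)
  show "c' \<le> 1/2"
    unfolding c'_def by (rule min.cobounded2)
  fix z assume "z \<in> S"
  have "c' * norm (z - x) \<le> (c / norm a) * norm (z - x)"
    unfolding c'_def by (intro mult_right_mono) auto
  also have "\<dots> \<le> inner (z - x) a / norm a"
    using assms \<open>z \<in> S\<close> by (simp add: divide_right_mono)
  also have "\<dots> = inner (z - x) (a /\<^sub>R norm a)"
    by (simp add: divide_inverse mult.commute)
  finally show "c' * norm (z - x) \<le> inner (z - x) (a /\<^sub>R norm a)" .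
qed

text \<open>Separate \<open>x\<close> from \<open>S\<close> by a hyperplane; every point of the hull lies on a segment from
  \<open>x\<close> to \<open>S\<close>.\<close>
lemma cone_bound_convex_hull_insert:
  fixes x :: "'a::euclidean_space"
  assumes "compact S" "convex S" "S \<noteq> {}" "x \<notin> S"
  shows "\<exists>a c. a \<noteq> 0 \<and> 0 < c \<and> (\<forall>z\<in>convex hull (insert x S). c * norm (z - x) \<le> inner (z - x) a)"
proof -
  obtain a b where ab: "inner a x < b" "\<forall>s\<in>S. b < inner a s"
    using separating_hyperplane_closed_point[of S x] assms by (auto simp: compact_imp_closed)
  obtain B where B: "0 < B" "\<forall>s\<in>S. norm s \<le> B"
    using compact_imp_bounded[OF assms(1)] bounded_pos by blast
  define R \<delta> where "R = B + norm x" and "\<delta> = b - inner a x"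
  have "0 < R"
    using B by (simp add: R_def add_pos_nonneg)
  have R_bound: "norm (s - x) \<le> R" if "s \<in> S" for s
    using B that norm_triangle_ineq4[of s x] by (auto simp: R_def)
  have "(\<delta> / R) * norm (z - x) \<le> inner (z - x) a" if z: "z \<in> convex hull (insert x S)" for z
  proof -
    obtain s where "s \<in> S" "z \<in> closed_segment x s"
      using z assms(2,3) by (auto simp: convex_hull_insert_segments hull_same)
    then obtain v where "0 \<le> v" "z = (1 - v) *\<^sub>R x + v *\<^sub>R s"
      by (auto simp: in_segment)
    then have vs: "0 \<le> v" "s \<in> S" "z - x = v *\<^sub>R (s - x)"
      using \<open>s \<in> S\<close> by (simp_all add: algebra_simps)
    have "norm (z - x) \<le> v * R"
      using vs R_bound[OF \<open>s \<in> S\<close>] by (simp add: mult_left_mono)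
    then have "(\<delta> / R) * norm (z - x) \<le> (\<delta> / R) * (v * R)"
      using ab \<open>0 < R\<close> by (intro mult_left_mono) (auto simp: \<delta>_def)
    also have "\<dots> = v * \<delta>"
      using \<open>0 < R\<close> by simp
    also have "\<dots> \<le> v * (inner a s - inner a x)"
      using vs ab by (intro mult_left_mono) (auto simp: \<delta>_def)
    also have "\<dots> = inner (z - x) a"
      using vs by (simp add: inner_diff_left inner_diff_right inner_commute)
    finally show ?thesis .
  qed
  moreover have "a \<noteq> 0" "0 < \<delta> / R"
    using ab \<open>0 < R\<close> assms(3) by (auto simp: \<delta>_def)
  ultimately show ?thesis
    by blast
qed

lemma cone_bound_at_extreme_point:
  fixes x :: "'a::euclidean_space"
  assumes "finite V" "x extreme_point_of convex hull V" "V \<noteq> {x}"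
  shows "\<exists>w c. norm w = 1 \<and> 0 < c \<and> c \<le> 1/2 \<and>
           (\<forall>z\<in>convex hull V. c * norm (z - x) \<le> inner (z - x) w)"
proof -
  define S where "S = convex hull (V - {x})"
  have "x \<in> V"
    using assms(2) by (rule extreme_point_of_convex_hull)
  then have "convex hull V = convex hull (insert x S)"
    unfolding S_def by (simp only: hull_insert[symmetric] insert_Diff)
  have "S \<subseteq> convex hull V - {x}"
    unfolding S_def using assms(2) extreme_point_of_stillconvex[of "convex hull V" x]
    by (intro hull_minimal) (auto intro: hull_inc)
  moreover have "S \<noteq> {}"
    using assms(3) \<open>x \<in> V\<close> by (auto simp: S_def)
  moreover have "compact S" "convex S"
    unfolding S_def using assms(1) by (simp_all add: compact_convex_hull finite_imp_compact)
  ultimately have "\<exists>a c. a \<noteq> 0 \<and> 0 < c \<and>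
      (\<forall>z\<in>convex hull (insert x S). c * norm (z - x) \<le> inner (z - x) a)"
    by (intro cone_bound_convex_hull_insert) auto
  then show ?thesis
    unfolding \<open>convex hull V = convex hull (insert x S)\<close> using cone_bound_normalize by blast
qed

lemma vec_angle_le_pi: "vec_angle u v \<le> pi"
proof -
  have "\<bar>inner u v\<bar> \<le> norm u * norm v"
    by (rule Cauchy_Schwarz_ineq2)
  then have h: "\<bar>inner u v / (norm u * norm v)\<bar> \<le> 1"
    by (cases "norm u * norm v = 0") (auto simp: abs_divide)
  show ?thesis
    unfolding vec_angle_def using abs_le_D1[OF h] abs_le_D2[OF h] by (intro arccos_ubound) auto
qed

text \<open>The hypothesis \<open>c \<le> 1/2\<close> covers zero vectors, whose \<open>vec_angle\<close> is \<open>arccos 0 = pi/2\<close>.\<close>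
lemma vec_angle_le_arccos_of_cone_bound:
  assumes w: "norm w = 1" and c: "0 < c" "c \<le> 1/2"
    and a: "c * norm a \<le> inner a w" and b: "c * norm b \<le> inner b w"
  shows "vec_angle a b \<le> arccos (2 * c^2 - 1)"
proof -
  have "c^2 \<le> (1/2)^2"
    using c by (intro power_mono) auto
  then have c2: "-1 \<le> 2 * c^2 - 1" "2 * c^2 - 1 \<le> 0"
    by (simp_all add: power2_eq_square)
  show ?thesis
  proof (cases "a = 0 \<or> b = 0")
    case True
    then have "vec_angle a b = arccos 0"
      unfolding vec_angle_def by auto
    also have "\<dots> \<le> arccos (2 * c^2 - 1)"
      using c2 by (intro arccos_le_arccos) auto
    finally show ?thesis .
  next
    case False
    define a' b' where "a' = a /\<^sub>R norm a" and "b' = b /\<^sub>R norm b"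
    have unit: "norm a' = 1" "norm b' = 1"
      using False by (simp_all add: a'_def b'_def)
    have "inner a' w = inner a w / norm a" "inner b' w = inner b w / norm b"
      by (simp_all add: a'_def b'_def divide_inverse mult.commute)
    then have "c \<le> inner a' w" "c \<le> inner b' w"
      using a b False by (simp_all add: pos_le_divide_eq)
    then have "2 * c \<le> norm (a' + b')"
      using Cauchy_Schwarz_ineq2[of "a' + b'" w] w by (simp add: inner_add_left)
    then have "(2 * c)^2 \<le> norm (a' + b')^2"
      using c by (intro power_mono) auto
    also have "norm (a' + b')^2 = 2 + 2 * inner a' b'"
      using unit by (simp add: power2_norm_eq_inner inner_add_left inner_add_right inner_commute)
        (simp add: power2_norm_eq_inner[symmetric])
    finally have "2 * c^2 - 1 \<le> inner a' b'"
      by (simp add: power_mult_distrib)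
    moreover have "inner a' b' \<le> 1"
      using Cauchy_Schwarz_ineq2[of a' b'] unit by simp
    moreover have "inner a' b' = inner a b / (norm a * norm b)"
      by (simp add: a'_def b'_def divide_inverse mult.commute mult.left_commute)
    ultimately show ?thesis
      unfolding vec_angle_def using c2 by (metis arccos_le_arccos)
  qed
qed

lemma exists_center_of_bounded_spread:
  fixes f :: "'a \<Rightarrow> real"
  assumes "S \<noteq> {}" "bdd_above (f ` S)" "bdd_below (f ` S)"
    and spread: "\<forall>a\<in>S. \<forall>b\<in>S. f a - f b \<le> B"
  shows "\<exists>\<beta>. \<forall>a\<in>S. \<bar>f a - \<beta>\<bar> \<le> B / 2"
proof -
  define U L where "U = (SUP a\<in>S. f a)" and "L = (INF a\<in>S. f a)"
  have bounds: "f a \<le> U" "L \<le> f a" if "a \<in> S" for a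
    using that assms(2,3) by (auto simp: U_def L_def intro: cSUP_upper cINF_lower)
  have "U \<le> f b + B" if "b \<in> S" for b
    unfolding U_def
  proof (rule cSUP_least[OF assms(1)])
    fix a assume "a \<in> S"
    then have "f a - f b \<le> B"
      using spread that by blast
    then show "f a \<le> f b + B"
      by simp
  qed
  then have "U - B \<le> L"
    unfolding L_def using assms(1) by (intro cINF_greatest) force+
  then have "\<bar>f a - (L + U) / 2\<bar> \<le> B / 2" if "a \<in> S" for a
    using bounds[OF that] unfolding abs_le_iff by (auto simp: field_simps)
  then show ?thesis
    by blast
qed

lemma cone_bound_of_half_plane_arg_interval:
  assumes frame: "plane_frame m k" and "0 \<le> \<gamma>" "\<gamma> < pi/2"
    and S: "\<forall>a\<in>S. 0 < inner (a - x) m \<and> \<bar>half_plane_arg m k (a - x) - \<beta>\<bar> \<le> \<gamma>"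
  shows "\<exists>w c. 0 < c \<and> (\<forall>a\<in>S. c * norm (a - x) \<le> inner (a - x) w)"
proof (intro exI conjI ballI)
  show "0 < cos \<gamma>"
    using assms(2,3) by (intro cos_gt_zero_pi) auto
  fix a assume "a \<in> S"
  define \<theta> where "\<theta> = half_plane_arg m k (a - x)"
  have "0 < inner (a - x) m"
    using S \<open>a \<in> S\<close> by blast
  then have "inner (a - x) (cos \<beta> *\<^sub>R m + sin \<beta> *\<^sub>R k) = norm (a - x) * cos (\<theta> - \<beta>)"
    using half_plane_arg_polar[OF frame, of "a - x"] unfolding \<theta>_def[symmetric]
    by (simp add: inner_add_right cos_diff algebra_simps)
  moreover have "cos \<gamma> \<le> cos \<bar>\<theta> - \<beta>\<bar>"
    using S \<open>a \<in> S\<close> assms(3) by (intro cos_monotone_0_pi_le) (auto simp: \<theta>_def)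
  then have "norm (a - x) * cos \<gamma> \<le> norm (a - x) * cos (\<theta> - \<beta>)"
    by (intro mult_left_mono) auto
  ultimately show "cos \<gamma> * norm (a - x) \<le> inner (a - x) (cos \<beta> *\<^sub>R m + sin \<beta> *\<^sub>R k)"
    by (simp add: mult.commute)
qed

lemma cone_bound_of_half_plane_arg_spread:
  assumes frame: "plane_frame m k" and "S \<noteq> {}" and pos: "\<forall>a\<in>S. 0 < inner (a - x) m"
    and spread: "\<forall>a\<in>S. \<forall>b\<in>S. half_plane_arg m k (a - x) - half_plane_arg m k (b - x) \<le> B"
    and "B < pi"
  shows "\<exists>w c. 0 < c \<and> (\<forall>a\<in>S. c * norm (a - x) \<le> inner (a - x) w)"
proof -
  have "bdd_above ((\<lambda>a. half_plane_arg m k (a - x)) ` S)"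
    "bdd_below ((\<lambda>a. half_plane_arg m k (a - x)) ` S)"
    using half_plane_arg_bounds[of m k] less_imp_le by (metis bdd_aboveI2, metis bdd_belowI2)
  then obtain \<beta> where \<beta>: "\<forall>a\<in>S. \<bar>half_plane_arg m k (a - x) - \<beta>\<bar> \<le> B / 2"
    using exists_center_of_bounded_spread[OF \<open>S \<noteq> {}\<close> _ _ spread] by blast
  then have "0 \<le> B / 2"
    using \<open>S \<noteq> {}\<close> by (meson abs_ge_zero equals0I order_trans)
  moreover have "B / 2 < pi / 2"
    using \<open>B < pi\<close> by simp
  moreover have "\<forall>a\<in>S. 0 < inner (a - x) m \<and> \<bar>half_plane_arg m k (a - x) - \<beta>\<bar> \<le> B / 2"
    using \<beta> pos by blast
  ultimately show ?thesis
    by (rule cone_bound_of_half_plane_arg_interval[OF frame])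
qed

section \<open>Polar angles of the hull at the vertex\<close>

locale vertex_frame =
  fixes m k x :: "real^2" and P P' :: "(real^2) set" and d \<alpha> :: real
  assumes frame: "plane_frame m k" and d_pos: "0 < d"
    and convex_P: "convex P" and convex_P': "convex P'"
    and P_nonempty: "P \<noteq> {}" and P'_nonempty: "P' \<noteq> {}"
    and P_half_plane: "\<forall>c\<in>P. 0 < inner (c - x) m"
    and P'_far: "\<forall>y\<in>P'. d \<le> inner (y - x) m"
    and P'_near: "\<forall>y\<in>P'. infdist y P \<le> d"
    and P_angle: "\<forall>a\<in>P. \<forall>b\<in>P. vec_angle (a - x) (b - x) \<le> \<alpha>"
    and alpha_lt_pi: "\<alpha> < pi"
begin

abbreviation \<theta> :: "real^2 \<Rightarrow> real" where
  "\<theta> v \<equiv> half_plane_arg m k (v - x)"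

lemma P_arg_spread: "a \<in> P \<Longrightarrow> b \<in> P \<Longrightarrow> \<theta> a - \<theta> b \<le> \<alpha>"
  using vec_angle_eq_half_plane_arg_diff[OF frame, of "a - x" "b - x"] P_half_plane P_angle
  by fastforce

lemma P'_arg_spread_P:
  assumes "y \<in> P'" "p \<in> P"
  shows "\<theta> y - \<theta> p \<le> (\<alpha> + pi) / 2"
proof (rule ccontr)
  define \<eta> where "\<eta> = 2 * (\<theta> y - \<theta> p) - \<alpha> - pi"
  assume "\<not> ?thesis"
  then have "0 < \<eta>"
    by (simp add: \<eta>_def field_simps)
  then obtain c where "c \<in> P" "2 * \<theta> y - pi/2 - \<eta> < \<theta> c"
    using exists_half_plane_arg_gt[OF frame d_pos P_half_plane P_nonempty] P'_far P'_near assms(1)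
    by blast
  then show False
    using P_arg_spread[of c p] assms(2) half_plane_arg_bounds(1)[of m k "p - x"]
    by (simp add: \<eta>_def)
qed

lemma P_arg_spread_P':
  assumes "y \<in> P'" "p \<in> P"
  shows "\<theta> p - \<theta> y \<le> (\<alpha> + pi) / 2"
proof (rule ccontr)
  define \<eta> where "\<eta> = 2 * (\<theta> p - \<theta> y) - \<alpha> - pi"
  assume "\<not> ?thesis"
  then have "0 < \<eta>"
    by (simp add: \<eta>_def field_simps)
  then obtain c where "c \<in> P" "\<theta> c < 2 * \<theta> y + pi/2 + \<eta>"
    using exists_half_plane_arg_lt[OF frame d_pos P_half_plane P_nonempty] P'_far P'_near assms(1)
    by blast
  then show False
    using P_arg_spread[of p c] assms(2) half_plane_arg_bounds(2)[of m k "p - x"]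
    by (simp add: \<eta>_def)
qed

lemma P'_arg_spread:
  assumes "y1 \<in> P'" "y2 \<in> P'"
  shows "\<theta> y1 - \<theta> y2 \<le> (\<alpha> + pi) / 2"
proof (rule ccontr)
  define \<eta> where "\<eta> = \<theta> y1 - \<theta> y2 - (\<alpha> + pi) / 2"
  assume "\<not> ?thesis"
  then have "0 < \<eta>"
    by (simp add: \<eta>_def)
  obtain c1 where "c1 \<in> P" "2 * \<theta> y1 - pi/2 - \<eta> < \<theta> c1"
    using exists_half_plane_arg_gt[OF frame d_pos P_half_plane P_nonempty _ _ \<open>0 < \<eta>\<close>]
      P'_far P'_near assms(1) by blast
  moreover obtain c2 where "c2 \<in> P" "\<theta> c2 < 2 * \<theta> y2 + pi/2 + \<eta>"
    using exists_half_plane_arg_lt[OF frame d_pos P_half_plane P_nonempty _ _ \<open>0 < \<eta>\<close>]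
      P'_far P'_near assms(2) by blast
  ultimately show False
    using P_arg_spread[of c1 c2] by (simp add: \<eta>_def field_simps)
qed

lemma hull_arg_between:
  assumes "a \<in> convex hull (P \<union> P')"
  shows "0 < inner (a - x) m \<and> (\<exists>s\<in>P. \<exists>t\<in>P'. min (\<theta> s) (\<theta> t) \<le> \<theta> a \<and> \<theta> a \<le> max (\<theta> s) (\<theta> t))"
proof -
  obtain u v s t where uv: "0 \<le> u" "0 \<le> v" "u + v = 1" and "s \<in> P" "t \<in> P'"
    and a: "a = u *\<^sub>R s + v *\<^sub>R t"
    using assms convex_hull_union_two[OF convex_P P_nonempty convex_P' P'_nonempty] by auto
  have ax: "a - x = u *\<^sub>R (s - x) + v *\<^sub>R (t - x)"
    using a uv(3) by (simp add: algebra_simps flip: scaleR_add_left)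
  have s: "0 < inner (s - x) m" and t: "0 < inner (t - x) m"
    using P_half_plane P'_far d_pos \<open>s \<in> P\<close> \<open>t \<in> P'\<close> by force+
  have "0 < u * inner (s - x) m + v * inner (t - x) m"
    using uv s t by (cases "u = 0") (auto intro: add_pos_nonneg)
  then have "0 < inner (a - x) m"
    by (simp add: ax inner_add_left)
  then show ?thesis
    using half_plane_arg_nonneg_combination[OF s t uv(1,2)] uv(3) \<open>s \<in> P\<close> \<open>t \<in> P'\<close>
    by (auto simp: ax)
qed

lemma hull_arg_spread:
  assumes "a \<in> convex hull (P \<union> P')" "b \<in> convex hull (P \<union> P')"
  shows "\<theta> a - \<theta> b \<le> (\<alpha> + pi) / 2"
proof -
  obtain s1 t1 where "s1 \<in> P" "t1 \<in> P'" "\<theta> a \<le> max (\<theta> s1) (\<theta> t1)"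
    using hull_arg_between[OF assms(1)] by blast
  moreover obtain s2 t2 where "s2 \<in> P" "t2 \<in> P'" "min (\<theta> s2) (\<theta> t2) \<le> \<theta> b"
    using hull_arg_between[OF assms(2)] by blast
  moreover have "\<theta> s1 - \<theta> s2 \<le> (\<alpha> + pi) / 2"
    using P_arg_spread[of s1 s2] alpha_lt_pi \<open>s1 \<in> P\<close> \<open>s2 \<in> P\<close> by simp
  ultimately show ?thesis
    using P_arg_spread_P'[of t2 s1] P'_arg_spread_P[of t1 s2] P'_arg_spread[of t1 t2]
    by (auto simp: max_def min_def split: if_splits)
qed

lemma hull_vec_angle_le:
  assumes "a \<in> convex hull (P \<union> P')" "b \<in> convex hull (P \<union> P')"
  shows "vec_angle (a - x) (b - x) \<le> (\<alpha> + pi) / 2"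
proof -
  have "vec_angle (a - x) (b - x) = \<bar>\<theta> a - \<theta> b\<bar>"
    using vec_angle_eq_half_plane_arg_diff[OF frame] hull_arg_between assms by blast
  then show ?thesis
    using hull_arg_spread[OF assms] hull_arg_spread[OF assms(2,1)] by linarith
qed

lemma hull_extreme_point:
  assumes "x \<in> closure (convex hull (P \<union> P'))"
  shows "x extreme_point_of closure (convex hull (P \<union> P'))"
proof -
  have "convex hull (P \<union> P') \<noteq> {}"
    using P_nonempty by simp
  moreover have "\<forall>a\<in>convex hull (P \<union> P'). 0 < inner (a - x) m"
    using hull_arg_between by blast
  moreover have "\<forall>a\<in>convex hull (P \<union> P'). \<forall>b\<in>convex hull (P \<union> P'). \<theta> a - \<theta> b \<le> (\<alpha> + pi) / 2"
    using hull_arg_spread by blast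
  moreover have "(\<alpha> + pi) / 2 < pi"
    using alpha_lt_pi by simp
  ultimately have "\<exists>w c. 0 < c \<and> (\<forall>a\<in>convex hull (P \<union> P'). c * norm (a - x) \<le> inner (a - x) w)"
    by (rule cone_bound_of_half_plane_arg_spread[OF frame])
  then obtain w c where "0 < c"
    and cone: "\<forall>a\<in>convex hull (P \<union> P'). c * norm (a - x) \<le> inner (a - x) w"
    by blast
  have "closed {z. c * norm (z - x) \<le> inner (z - x) w}"
    by (intro closed_Collect_le continuous_intros)
  then have "closure (convex hull (P \<union> P')) \<subseteq> {z. c * norm (z - x) \<le> inner (z - x) w}"
    using cone by (intro closure_minimal) auto
  then show ?thesis
    using extreme_point_of_cone_bound[OF assms \<open>0 < c\<close>] by blast
qed

end

section \<open>Convex polygons and the Hausdorff distance\<close>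

lemma open_convex_polygonE:
  assumes "open_convex_polygon P"
  obtains V where "finite V" "closure P = convex hull V" "P = interior (convex hull V)" "P \<noteq> {}"
proof -
  obtain V where V: "finite V" "P = interior (convex hull V)" "P \<noteq> {}"
    using assms unfolding open_convex_polygon_def by auto
  moreover have "closure P = convex hull V"
    using V convex_closure_interior[of "convex hull V"]
    by (simp add: closure_closed compact_imp_closed compact_convex_hull finite_imp_compact)
  ultimately show thesis
    using that by blast
qed

lemma open_convex_polygonD:
  assumes "open_convex_polygon P"
  shows "open P" "convex P" "bounded P" "P \<noteq> {}"
proof -
  obtain V where "finite V" "P = interior (convex hull V)" "P \<noteq> {}"
    using assms by (rule open_convex_polygonE)
  moreover have "bounded (convex hull V)"
    using \<open>finite V\<close> by (simp add: compact_imp_bounded compact_convex_hull finite_imp_compact)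
  ultimately show "open P" "convex P" "bounded P" "P \<noteq> {}"
    by (auto intro: convex_interior bounded_subset[OF _ interior_subset])
qed

lemma polygon_vertex_cone_bound:
  assumes "open_convex_polygon P" "polygon_vertex x P"
  obtains w c where "norm w = 1" "0 < c" "c \<le> 1/2"
    "\<forall>z\<in>closure P. c * norm (z - x) \<le> inner (z - x) w"
proof -
  obtain V where V: "finite V" "closure P = convex hull V" "P = interior (convex hull V)" "P \<noteq> {}"
    using assms(1) by (rule open_convex_polygonE)
  then have "V \<noteq> {x}"
    by auto
  then show thesis
    using cone_bound_at_extreme_point[OF V(1)] assms(2) that
    unfolding polygon_vertex_def V(2) by blast
qed

lemma vec_angle_le_polygon_angle:
  assumes "a \<in> P" "b \<in> P"
  shows "vec_angle (a - x) (b - x) \<le> polygon_angle P x"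
proof -
  have "bdd_above ((\<lambda>p. vec_angle (fst p - x) (snd p - x)) ` (P \<times> P))"
    by (rule bdd_aboveI2[where M = pi]) (rule vec_angle_le_pi)
  moreover have "(a, b) \<in> P \<times> P"
    using assms by simp
  ultimately show ?thesis
    unfolding polygon_angle_def by (rule cSUP_upper2) simp
qed

lemma polygon_angle_lt_pi:
  assumes "open_convex_polygon P" "polygon_vertex x P"
  shows "polygon_angle P x < pi"
proof -
  obtain w c where wc: "norm w = 1" "0 < c" "c \<le> 1/2"
    and cone: "\<forall>z\<in>closure P. c * norm (z - x) \<le> inner (z - x) w"
    using assms by (rule polygon_vertex_cone_bound)
  have "P \<noteq> {}"
    using open_convex_polygonD(4)[OF assms(1)] .
  then have "polygon_angle P x \<le> arccos (2 * c^2 - 1)"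
    unfolding polygon_angle_def using cone closure_subset[of P]
    by (intro cSUP_least) (auto intro!: vec_angle_le_arccos_of_cone_bound[OF wc])
  also have "\<dots> < pi"
  proof -
    have "c^2 \<le> (1/2)^2"
      using wc by (intro power_mono) auto
    then have "2 * c^2 - 1 < 1"
      by (simp add: power2_eq_square)
    moreover have "-1 < 2 * c^2 - 1"
      using wc by simp
    ultimately show ?thesis
      using arccos_lt_bounded by fastforce
  qed
  finally show ?thesis .
qed

lemma bdd_above_infdist_image:
  fixes A B :: "'a::real_normed_vector set"
  assumes "bounded A" "B \<noteq> {}"
  shows "bdd_above ((\<lambda>z. infdist z B) ` A)"
proof -
  obtain y where "y \<in> B"
    using assms(2) by auto
  obtain K where K: "\<forall>z\<in>A. norm z \<le> K"
    using assms(1) bounded_iff by blast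
  have "infdist z B \<le> K + norm y" if "z \<in> A" for z
  proof -
    have "norm z \<le> K"
      using K that by blast
    then show ?thesis
      using infdist_le[OF \<open>y \<in> B\<close>, of z] norm_triangle_ineq4[of z y] by (simp add: dist_norm)
  qed
  then show ?thesis
    by (intro bdd_aboveI2)
qed

lemma infdist_le_hausdorff_dist:
  assumes "bounded P" "bounded P'" "P \<noteq> {}" "P' \<noteq> {}"
  shows "z \<in> P \<Longrightarrow> infdist z P' \<le> hausdorff_dist P P'"
    and "y \<in> P' \<Longrightarrow> infdist y P \<le> hausdorff_dist P P'"
  unfolding hausdorff_dist_def
  using cSUP_upper[OF _ bdd_above_infdist_image[OF assms(1,4)]]
    cSUP_upper[OF _ bdd_above_infdist_image[OF assms(2,3)]]
  by (meson max.coboundedI1 max.coboundedI2)+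

lemma open_convex_polygon_eq_if_closure_subsets:
  assumes "open_convex_polygon P" "open_convex_polygon P'" "P \<subseteq> closure P'" "P' \<subseteq> closure P"
  shows "P = P'"
proof -
  have "closure P = closure P'"
    using assms(3,4) by (metis closure_closure closure_mono subset_antisym)
  moreover have "P = interior (closure P)" "P' = interior (closure P')"
    using open_convex_polygonD[OF assms(1)] open_convex_polygonD[OF assms(2)]
    by (simp_all add: convex_interior_closure interior_open)
  ultimately show ?thesis
    by simp
qed

text \<open>The unit vector from \<open>x\<close> towards its nearest point in the closure of \<open>S\<close>.\<close>
lemma exists_unit_vector_inner_ge_infdist:
  fixes x :: "'a::euclidean_space"
  assumes "convex S" "S \<noteq> {}" "0 < infdist x S"
  shows "\<exists>m. norm m = 1 \<and> (\<forall>y\<in>S. infdist x S \<le> inner (y - x) m)"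
proof -
  define K where "K = closure S"
  have K: "convex K" "closed K" "K \<noteq> {}"
    using assms by (auto simp: K_def convex_closure)
  define p where "p = closest_point K x"
  have "p \<in> K" and p_min: "\<forall>z\<in>K. dist x p \<le> dist x z"
    using closest_point_exists[OF K(2,3)] by (auto simp: p_def)
  define \<delta> where "\<delta> = dist x p"
  have "infdist p S = 0"
    using \<open>p \<in> K\<close> in_closure_iff_infdist_zero[OF assms(2)] by (simp add: K_def)
  then have "infdist x S \<le> \<delta>"
    using infdist_triangle[of x S p] by (simp add: \<delta>_def)
  then have "0 < \<delta>"
    using assms(3) by linarith
  have "\<delta> \<le> inner (y - x) ((p - x) /\<^sub>R \<delta>)" if "y \<in> S" for y
  proof -
    have "inner (x - p) (y - p) \<le> 0"
      using any_closest_point_dot[OF K(1,2) \<open>p \<in> K\<close> _ p_min] that closure_subset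
      by (auto simp: K_def)
    moreover have "inner (y - x) (p - x) = inner (y - p) (p - x) + \<delta>^2"
      by (simp add: \<delta>_def dist_norm norm_minus_commute power2_norm_eq_inner algebra_simps
          inner_diff_left inner_diff_right)
    ultimately have "\<delta> * \<delta> \<le> inner (y - x) (p - x)"
      by (simp add: power2_eq_square inner_diff_left inner_diff_right inner_commute)
    moreover have "inner (y - x) ((p - x) /\<^sub>R \<delta>) = inner (y - x) (p - x) / \<delta>"
      by (simp add: divide_inverse mult.commute)
    ultimately show ?thesis
      using \<open>0 < \<delta>\<close> by (simp add: pos_le_divide_eq)
  qed
  moreover have "norm ((p - x) /\<^sub>R \<delta>) = 1"
    using \<open>0 < \<delta>\<close> by (simp add: \<delta>_def dist_norm norm_minus_commute)
  ultimately show ?thesis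
    using \<open>infdist x S \<le> \<delta>\<close> by (blast intro: order_trans)
qed

lemma infdist_ge_of_half_space:
  fixes m :: "'a::real_inner"
  assumes "norm m = 1" "S \<noteq> {}" "\<forall>y\<in>S. d \<le> inner (y - x) m"
  shows "d - inner (z - x) m \<le> infdist z S"
  unfolding infdist_notempty[OF assms(2)]
proof (rule cINF_greatest[OF assms(2)])
  fix y assume "y \<in> S"
  have "inner (y - z) m \<le> norm (y - z)"
    using Cauchy_Schwarz_ineq2[of "y - z" m] assms(1) by simp
  moreover have "d \<le> inner (y - x) m"
    using assms(3) \<open>y \<in> S\<close> by blast
  ultimately have "d - inner (z - x) m \<le> norm (y - z)"
    unfolding inner_diff_left by linarith
  then show "d - inner (z - x) m \<le> dist z y"
    by (simp add: dist_norm norm_minus_commute)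
qed

lemma open_nonneg_inner_imp_pos:
  fixes m :: "'a::real_inner"
  assumes "open P" "m \<noteq> 0" "\<forall>z\<in>P. 0 \<le> inner (z - x) m" "z \<in> P"
  shows "0 < inner (z - x) m"
proof -
  obtain r where "0 < r" "ball z r \<subseteq> P"
    using assms(1,4) open_contains_ball by blast
  define t where "t = r / (2 * norm m)"
  have "0 < t" "t * norm m < r"
    using \<open>0 < r\<close> assms(2) by (simp_all add: t_def)
  then have "z - t *\<^sub>R m \<in> P"
    using \<open>ball z r \<subseteq> P\<close> by (auto simp: dist_norm)
  then have "0 \<le> inner (z - x) m - t * inner m m"
    using assms(3) by (force simp: inner_diff_left)
  moreover have "0 < t * inner m m"
    using \<open>0 < t\<close> assms(2) by simp
  ultimately show ?thesis
    by linarith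
qed

lemma hull_vertex_angle_if_infdist_pos:
  assumes P: "open_convex_polygon P" and P': "open_convex_polygon P'" and x: "polygon_vertex x P"
    and d: "0 < infdist x P'"
    and P_near: "\<forall>z\<in>P. infdist z P' \<le> infdist x P'" and P'_near: "\<forall>y\<in>P'. infdist y P \<le> infdist x P'"
  shows "polygon_vertex x (convex hull (P \<union> P'))
    \<and> polygon_angle (convex hull (P \<union> P')) x \<le> (polygon_angle P x + pi) / 2"
proof -
  note P_props = open_convex_polygonD[OF P] and P'_props = open_convex_polygonD[OF P']
  obtain m where m: "norm m = 1" and P'_far: "\<forall>y\<in>P'. infdist x P' \<le> inner (y - x) m"
    using exists_unit_vector_inner_ge_infdist[OF P'_props(2,4) d] by blast
  have "\<forall>z\<in>P. 0 \<le> inner (z - x) m"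
    using infdist_ge_of_half_space[OF m P'_props(4) P'_far] P_near by (smt (verit))
  moreover have "m \<noteq> 0"
    using m by auto
  ultimately have "\<forall>z\<in>P. 0 < inner (z - x) m"
    using open_nonneg_inner_imp_pos[OF P_props(1)] by blast
  moreover have "plane_frame m (rot90 m)"
    using m by (simp add: plane_frame_def)
  ultimately interpret vertex_frame m "rot90 m" x P P' "infdist x P'" "polygon_angle P x"
    using d P_props P'_props P'_far P'_near vec_angle_le_polygon_angle polygon_angle_lt_pi[OF P x]
    by unfold_locales auto
  have "polygon_angle (convex hull (P \<union> P')) x \<le> (polygon_angle P x + pi) / 2"
    unfolding polygon_angle_def[of "convex hull (P \<union> P')"] using P_props(4) hull_vec_angle_le
    by (intro cSUP_least) (auto simp: hull_inc)
  moreover have "x \<in> closure (convex hull (P \<union> P'))"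
    using x closure_mono[OF hull_subset[of "P \<union> P'" convex]]
    by (auto simp: polygon_vertex_def extreme_point_of_def)
  ultimately show ?thesis
    using hull_extreme_point by (simp add: polygon_vertex_def)
qed

theorem mainTheorem18:
  fixes P P' :: "(real^2) set" and x\<^sub>c :: "real^2"
  assumes "open_convex_polygon P" and "open_convex_polygon P'"
    and "polygon_vertex x\<^sub>c P"
    and "infdist x\<^sub>c P' = hausdorff_dist P P'"
  defines "Q \<equiv> convex hull (P \<union> P')"
  shows "polygon_vertex x\<^sub>c Q
         \<and> polygon_angle Q x\<^sub>c \<le> (polygon_angle P x\<^sub>c + pi) / 2
         \<and> (polygon_angle P x\<^sub>c + pi) / 2 < pi"
proof -
  note P = open_convex_polygonD[OF assms(1)] and P' = open_convex_polygonD[OF assms(2)]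
  have near: "\<forall>z\<in>P. infdist z P' \<le> infdist x\<^sub>c P'" "\<forall>y\<in>P'. infdist y P \<le> infdist x\<^sub>c P'"
    using infdist_le_hausdorff_dist[OF P(3) P'(3) P(4) P'(4)] assms(4) by auto
  have "polygon_angle P x\<^sub>c < pi"
    using polygon_angle_lt_pi[OF assms(1,3)] .
  moreover have "polygon_vertex x\<^sub>c Q \<and> polygon_angle Q x\<^sub>c \<le> (polygon_angle P x\<^sub>c + pi) / 2"
  proof (cases "infdist x\<^sub>c P' = 0")
    case True
    then have "P \<subseteq> closure P'" "P' \<subseteq> closure P"
      using near infdist_nonneg in_closure_iff_infdist_zero P(4) P'(4) by (metis order.antisym subsetI)+
    then have "Q = P"
      using open_convex_polygon_eq_if_closure_subsets[OF assms(1,2)] P(2) by (simp add: Q_def hull_same)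
    then show ?thesis
      using assms(3) \<open>polygon_angle P x\<^sub>c < pi\<close> by simp
  next
    case False
    then show ?thesis
      using hull_vertex_angle_if_infdist_pos[OF assms(1-3) _ near] infdist_nonneg[of x\<^sub>c P']
      by (simp add: Q_def)
  qed
  ultimately show ?thesis
    by simp
qed

end
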